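(* Suppose $1/d\le\lambda\le d$, and let $L=\{0\}\subset\mathbb R^d$ and $C=\mathcal M_{\mathsf{diff}}\cap\mathbb R^d_{\ge0}$. There is an absolute constant $c>0$ such that when each entry of the parameter $\theta$ is independently observed $\mathrm{Poi}(\lambda)$ times and each observation is corrupted by independent standard Gaussian noise, \[ \inf_\psi\mathcal E(\psi;L,C,\epsilon)\ge\frac12\quad\text{whenever}\quad\epsilon^2\le c\frac{d^{1/4}}{\lambda^{3/4}}. \]
   Context: $\mathcal M^d=\{\theta\in\mathbb R^d:\theta_1\le\theta_2\le\cdots\le\theta_d\}$ and $\mathcal M_{\mathsf{diff}}=\{u-v:u,v\in\mathcal M^d\}$; $\mathbb R^d_{\ge0}$ is the positive orthant. Observation model: given $\theta\in\mathbb R^d$, draw counts $\kappa_1,\dots,\kappa_d$ i.i.d. $\mathrm{Poi}(\lambda)$ and, for each $i$, $\kappa_i$ independent observations $\theta_i+g$ with $g\sim\mathcal N(0,1)$ independent; $y$ is the full observation and $\mathbb E_\theta$ expectation under $\theta$. For $C_1\subset C_2$ and $\epsilon>0$, $\mathbb B_2(C_1;\epsilon)=\{\theta:\inf_{x\in C_1}\|\theta-x\|_2\le\epsilon\}$, and for a measurable test $\psi$ with values in $\{0,1\}$, $\mathcal E(\psi;C_1,C_2,\epsilon)=\sup_{\theta\in C_1}\mathbb E_\theta[\psi(y)]+\sup_{\theta\in C_2\setminus\mathbb B_2(C_1;\epsilon)}\mathbb E_\theta[1-\psi(y)]$. The infimum is over all such tests. *)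

theory Defs
  imports "HOL-Probability.Probability"
begin

text \<open>Vectors in R^d are represented as functions nat => real, coordinates 0..d-1,
  equal to 0 outside {..<d}.\<close>

definition vecs :: "nat \<Rightarrow> (nat \<Rightarrow> real) set" where
  "vecs d = {\<theta>. \<forall>i\<ge>d. \<theta> i = 0}"

definition l2norm :: "nat \<Rightarrow> (nat \<Rightarrow> real) \<Rightarrow> real" where
  "l2norm d \<theta> = sqrt (\<Sum>i<d. (\<theta> i)^2)"

definition monotone_cone :: "nat \<Rightarrow> (nat \<Rightarrow> real) set" where
  "monotone_cone d = {\<theta> \<in> vecs d. \<forall>i j. i \<le> j \<longrightarrow> j < d \<longrightarrow> \<theta> i \<le> \<theta> j}"

definition monotone_diff :: "nat \<Rightarrow> (nat \<Rightarrow> real) set" where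
  "monotone_diff d = {\<lambda>i. u i - v i | u v. u \<in> monotone_cone d \<and> v \<in> monotone_cone d}"

definition pos_orthant :: "nat \<Rightarrow> (nat \<Rightarrow> real) set" where
  "pos_orthant d = {\<theta> \<in> vecs d. \<forall>i<d. 0 \<le> \<theta> i}"

definition enlarge :: "nat \<Rightarrow> (nat \<Rightarrow> real) set \<Rightarrow> real \<Rightarrow> (nat \<Rightarrow> real) set" where
  "enlarge d C1 \<epsilon> = {\<theta> \<in> vecs d. (INF x\<in>C1. l2norm d (\<lambda>i. \<theta> i - x i)) \<le> \<epsilon>}"

definition std_normal :: "real measure" where
  "std_normal = density lborel std_normal_density"

text \<open>Observation of a single coordinate with value t: a count k ~ Poi(lam) and
  the k noisy observations t + g_j (j < k); unobserved slots j >= k are set to 0.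
  The iid noise g_0, g_1, ... is drawn from the infinite product of standard Gaussians.\<close>
definition obs_space :: "(nat \<times> (nat \<Rightarrow> real)) measure" where
  "obs_space = count_space UNIV \<Otimes>\<^sub>M PiM UNIV (\<lambda>_. borel)"

definition obs_coord :: "real \<Rightarrow> real \<Rightarrow> (nat \<times> (nat \<Rightarrow> real)) measure" where
  "obs_coord lam t =
     distr (measure_pmf (poisson_pmf lam) \<Otimes>\<^sub>M PiM UNIV (\<lambda>_. std_normal)) obs_space
       (\<lambda>(k, g). (k, \<lambda>j. if j < k then t + g j else 0))"

definition obs_law :: "nat \<Rightarrow> real \<Rightarrow> (nat \<Rightarrow> real) \<Rightarrow> (nat \<Rightarrow> nat \<times> (nat \<Rightarrow> real)) measure" where
  "obs_law d lam \<theta> = PiM {..<d} (\<lambda>i. obs_coord lam (\<theta> i))"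

definition obs_full_space :: "nat \<Rightarrow> (nat \<Rightarrow> nat \<times> (nat \<Rightarrow> real)) measure" where
  "obs_full_space d = PiM {..<d} (\<lambda>_. obs_space)"

text \<open>A test is a measurable map psi from the observation space to {0,1} (bool; True = 1).
  Risk E(psi; C1, C2, eps).\<close>
definition test_risk ::
  "nat \<Rightarrow> real \<Rightarrow> ((nat \<Rightarrow> nat \<times> (nat \<Rightarrow> real)) \<Rightarrow> bool) \<Rightarrow> (nat \<Rightarrow> real) set \<Rightarrow> (nat \<Rightarrow> real) set \<Rightarrow> real \<Rightarrow> real" where
  "test_risk d lam \<psi> C1 C2 \<epsilon> =
     (SUP \<theta>\<in>C1. measure (obs_law d lam \<theta>) {y \<in> space (obs_law d lam \<theta>). \<psi> y})
   + (SUP \<theta>\<in>C2 - enlarge d C1 \<epsilon>. measure (obs_law d lam \<theta>) {y \<in> space (obs_law d lam \<theta>). \<not> \<psi> y})"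

end

theory Submission
  imports Defs
begin

text \<open>
  Le Cam's method with a sparse random prior. For a random set S containing each coordinate
  independently with probability p, the spike t 1_S is nonnegative and, like every vector, a difference of two
  monotone vectors; it is epsilon-far from 0 unless |S| t^2 <= epsilon^2. Hence every test errs
  with probability at least 1 - TV(P_0, mixture) - P(|S| t^2 <= epsilon^2), and the total
  variation is controlled by the second moment of the mixture likelihood ratio. For a Poisson number
  of Gaussian observations the likelihood ratios of theta and theta' have correlation
  exp(lam (exp(theta_i theta'_i) - 1)) in coordinate i, so this second moment is
  (1 + p^2 (exp(lam (exp(t^2) - 1)) - 1))^d. With t^2 = 1/(4 max 1 lam) and d p of order
  max 1 (epsilon^2 max 1 lam) it stays close to 1 while a Chernoff bound makes the near mass
  small, as long as epsilon^2 <= c d^(1/4) / lam^(3/4). For d < 2000 the single alternative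
  p = 1, d t^2 = 2 epsilon^2 suffices.
\<close>

section \<open>Products of probability spaces\<close>

lemma PiM_density:
  assumes I: "finite I" and M: "\<And>i. prob_space (M i)"
    and f: "\<And>i. f i \<in> borel_measurable (M i)"
    and Mf: "\<And>i. prob_space (density (M i) (f i))"
  shows "PiM I (\<lambda>i. density (M i) (f i)) = density (PiM I M) (\<lambda>x. \<Prod>i\<in>I. f i (x i))"
proof -
  interpret M: product_prob_space M I by (rule product_prob_spaceI) (rule M)
  interpret Mf: product_prob_space "\<lambda>i. density (M i) (f i)" I
    by (rule product_prob_spaceI) (rule Mf)
  have "density (PiM I M) (\<lambda>x. \<Prod>i\<in>I. f i (x i)) = PiM I (\<lambda>i. density (M i) (f i))"
  proof (rule Mf.PiM_eqI[OF I])
    show "sets (density (PiM I M) (\<lambda>x. \<Prod>i\<in>I. f i (x i))) = sets (PiM I (\<lambda>i. density (M i) (f i)))"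
      unfolding sets_density by (rule sets_PiM_cong) auto
  next
    fix A assume "\<And>i. i \<in> I \<Longrightarrow> A i \<in> sets (density (M i) (f i))"
    then have A: "\<And>i. i \<in> I \<Longrightarrow> A i \<in> sets (M i)" by simp
    have "(\<lambda>x. \<Prod>i\<in>I. f i (x i)) \<in> borel_measurable (PiM I M)"
      using f by (intro borel_measurable_prod_ennreal) (simp add: measurable_PiM_component_rev)
    then have "emeasure (density (PiM I M) (\<lambda>x. \<Prod>i\<in>I. f i (x i))) (PiE I A)
        = (\<integral>\<^sup>+x. (\<Prod>i\<in>I. f i (x i)) * indicator (PiE I A) x \<partial>PiM I M)"
      using A I by (intro emeasure_density) (auto intro!: sets_PiM_I_finite)
    also have "\<dots> = (\<integral>\<^sup>+x. (\<Prod>i\<in>I. f i (x i) * indicator (A i) (x i)) \<partial>PiM I M)"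
      by (intro nn_integral_cong)
         (auto simp: indicator_def prod.distrib space_PiM PiE_def Pi_def extensional_def I)
    also have "\<dots> = (\<Prod>i\<in>I. \<integral>\<^sup>+y. f i y * indicator (A i) y \<partial>M i)"
      using A f by (intro M.product_nn_integral_prod I) auto
    also have "\<dots> = (\<Prod>i\<in>I. emeasure (density (M i) (f i)) (A i))"
      using A f by (intro prod.cong refl) (simp add: emeasure_density)
    finally show "emeasure (density (PiM I M) (\<lambda>x. \<Prod>i\<in>I. f i (x i))) (PiE I A)
        = (\<Prod>i\<in>I. emeasure (density (M i) (f i)) (A i))" .
  qed
  then show ?thesis by simp
qed

lemma nn_integral_PiM_restrict:
  assumes J: "finite J" "J \<subseteq> I" and M: "\<And>i. prob_space (M i)"
    and F: "F \<in> borel_measurable (PiM J M)"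
  shows "(\<integral>\<^sup>+x. F (restrict x J) \<partial>PiM I M) = (\<integral>\<^sup>+x. F x \<partial>PiM J M)"
proof -
  interpret product_prob_space M I by (rule product_prob_spaceI) (rule M)
  have "(\<integral>\<^sup>+x. F x \<partial>PiM J M) = (\<integral>\<^sup>+x. F x \<partial>distr (PiM I M) (PiM J M) (\<lambda>x. restrict x J))"
    by (simp add: distr_PiM_restrict_finite J)
  also have "\<dots> = (\<integral>\<^sup>+x. F (restrict x J) \<partial>PiM I M)"
    using F J by (intro nn_integral_distr) (auto intro!: measurable_restrict_subset)
  finally show ?thesis by simp
qed

section \<open>Gaussian location shifts\<close>

lemma prob_space_std_normal: "prob_space std_normal"
  unfolding std_normal_def by (rule prob_space_normal_density) simp

lemma sets_std_normal [simp, measurable_cong]: "sets std_normal = sets borel"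
  unfolding std_normal_def by simp

lemma space_std_normal [simp]: "space std_normal = UNIV"
  unfolding std_normal_def by simp

definition gauss_shift_density :: "real \<Rightarrow> real \<Rightarrow> real" where
  "gauss_shift_density t x = exp (t * x - t\<^sup>2 / 2)"

lemma gauss_shift_density_pos [simp]:
  "0 < gauss_shift_density t x" "0 \<le> gauss_shift_density t x"
  by (simp_all add: gauss_shift_density_def)

lemma gauss_shift_density_measurable [measurable]:
  "gauss_shift_density t \<in> borel_measurable borel"
  unfolding gauss_shift_density_def by measurable

lemma std_normal_density_shift:
  "std_normal_density (y - t) = std_normal_density y * gauss_shift_density t y"
proof -
  have "- (y - t)\<^sup>2 / 2 = - y\<^sup>2 / 2 + (t * y - t\<^sup>2 / 2)"
    by (simp add: power2_eq_square field_simps)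
  then show ?thesis
    by (simp add: std_normal_density_def gauss_shift_density_def exp_add[symmetric])
qed

lemma distr_std_normal_shift:
  "distr std_normal borel (\<lambda>x. t + x) = density std_normal (\<lambda>x. ennreal (gauss_shift_density t x))"
proof (rule measure_eqI)
  fix A assume "A \<in> sets (distr std_normal borel (\<lambda>x. t + x))"
  then have [measurable]: "A \<in> sets borel" by simp
  have "emeasure (distr std_normal borel (\<lambda>x. t + x)) A = (\<integral>\<^sup>+x. indicator A (t + x) \<partial>std_normal)"
    by (subst nn_integral_indicator[symmetric], simp) (subst nn_integral_distr, auto)
  also have "\<dots> = (\<integral>\<^sup>+x. ennreal (std_normal_density x) * indicator A (t + x) \<partial>lborel)"
    unfolding std_normal_def by (subst nn_integral_density) auto
  also have "\<dots> = (\<integral>\<^sup>+y. ennreal (std_normal_density (y - t)) * indicator A y \<partial>lborel)"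
    using nn_integral_real_affine[of "\<lambda>y. ennreal (std_normal_density (y - t)) * indicator A y" 1 t]
    by simp
  also have "\<dots> = (\<integral>\<^sup>+y. ennreal (std_normal_density y) *
                     (ennreal (gauss_shift_density t y) * indicator A y) \<partial>lborel)"
    by (intro nn_integral_cong) (simp add: std_normal_density_shift ennreal_mult' mult.assoc)
  also have "\<dots> = (\<integral>\<^sup>+y. ennreal (gauss_shift_density t y) * indicator A y \<partial>std_normal)"
    unfolding std_normal_def by (subst nn_integral_density) auto
  also have "\<dots> = emeasure (density std_normal (\<lambda>x. ennreal (gauss_shift_density t x))) A"
    by (subst emeasure_density) auto
  finally show "emeasure (distr std_normal borel (\<lambda>x. t + x)) A
      = emeasure (density std_normal (\<lambda>x. ennreal (gauss_shift_density t x))) A" .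
qed simp

lemma prob_space_density_gauss_shift:
  "prob_space (density std_normal (\<lambda>x. ennreal (gauss_shift_density t x)))"
proof -
  interpret prob_space std_normal by (rule prob_space_std_normal)
  have "prob_space (distr std_normal borel (\<lambda>x. t + x))" by (rule prob_space_distr) simp
  then show ?thesis by (simp add: distr_std_normal_shift)
qed

lemma nn_integral_gauss_shift_density:
  "(\<integral>\<^sup>+x. gauss_shift_density b (a + x) \<partial>std_normal) = ennreal (exp (a * b))"
proof -
  interpret prob_space "density std_normal (\<lambda>x. ennreal (gauss_shift_density b x))"
    by (rule prob_space_density_gauss_shift)
  have shift: "gauss_shift_density b (a + x) = exp (a * b) * gauss_shift_density b x" for x
    by (simp add: gauss_shift_density_def exp_add[symmetric] algebra_simps)
  have "(\<integral>\<^sup>+x. gauss_shift_density b x \<partial>std_normal) = 1"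
    using emeasure_space_1 by (simp add: emeasure_density)
  then show ?thesis
    by (simp add: shift ennreal_mult nn_integral_cmult)
qed

lemma nn_integral_PiM_std_normal_shift:
  assumes K: "finite K" and F: "F \<in> borel_measurable (PiM K (\<lambda>_. std_normal))"
  shows "(\<integral>\<^sup>+x. F (\<lambda>j\<in>K. t + x j) \<partial>PiM K (\<lambda>_. std_normal))
       = (\<integral>\<^sup>+x. F x * (\<Prod>j\<in>K. ennreal (gauss_shift_density t (x j))) \<partial>PiM K (\<lambda>_. std_normal))"
proof -
  define N where "N = density std_normal (\<lambda>x. ennreal (gauss_shift_density t x))"
  have sets_N [simp]: "sets N = sets borel" by (simp add: N_def)
  have sets_PiM_N: "sets (PiM K (\<lambda>_. N)) = sets (PiM K (\<lambda>_. std_normal))"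
    by (rule sets_PiM_cong) auto
  have shift: "(\<lambda>x. t + x) \<in> std_normal \<rightarrow>\<^sub>M N"
    by (subst measurable_cong_sets[of _ borel _ borel]) auto
  have "distr (PiM K (\<lambda>_. std_normal)) (PiM K (\<lambda>_. N)) (compose K (\<lambda>x. t + x))
      = PiM K (\<lambda>_. distr std_normal N (\<lambda>x. t + x))"
    using K shift
    by (intro distr_PiM_finite_prob_space') (auto simp: prob_space_std_normal N_def prob_space_density_gauss_shift)
  also have "distr std_normal N (\<lambda>x. t + x) = distr std_normal borel (\<lambda>x. t + x)"
    by (rule distr_cong) auto
  also have "\<dots> = N"
    by (simp add: N_def distr_std_normal_shift)
  also have "PiM K (\<lambda>_. N) = density (PiM K (\<lambda>_. std_normal)) (\<lambda>x. \<Prod>j\<in>K. ennreal (gauss_shift_density t (x j)))"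
    unfolding N_def
    by (rule PiM_density[OF K prob_space_std_normal _ prob_space_density_gauss_shift]) simp
  finally have image: "distr (PiM K (\<lambda>_. std_normal)) (PiM K (\<lambda>_. N)) (compose K (\<lambda>x. t + x))
      = density (PiM K (\<lambda>_. std_normal)) (\<lambda>x. \<Prod>j\<in>K. ennreal (gauss_shift_density t (x j)))" .
  have "compose K (\<lambda>x. t + x) \<in> PiM K (\<lambda>_. std_normal) \<rightarrow>\<^sub>M PiM K (\<lambda>_. N)"
    unfolding compose_def by (rule measurable_restrict) (simp add: measurable_cong_sets[OF refl sets_N])
  then have "(\<integral>\<^sup>+x. F (\<lambda>j\<in>K. t + x j) \<partial>PiM K (\<lambda>_. std_normal))
      = (\<integral>\<^sup>+y. F y \<partial>distr (PiM K (\<lambda>_. std_normal)) (PiM K (\<lambda>_. N)) (compose K (\<lambda>x. t + x)))"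
    using F by (subst nn_integral_distr) (auto simp: compose_def measurable_cong_sets[OF sets_PiM_N refl])
  also have "\<dots> = (\<integral>\<^sup>+x. (\<Prod>j\<in>K. ennreal (gauss_shift_density t (x j))) * F x \<partial>PiM K (\<lambda>_. std_normal))"
    unfolding image using F by (subst nn_integral_density) auto
  finally show ?thesis by (simp add: mult.commute)
qed

lemma measurable_extend_by_zero:
  "(\<lambda>x j. if j < k then x j else 0) \<in> PiM {..<k} (\<lambda>_. borel) \<rightarrow>\<^sub>M PiM UNIV (\<lambda>_. borel :: real measure)"
proof (rule measurable_PiM_single')
  show "(\<lambda>x. if j < k then x j else 0) \<in> borel_measurable (PiM {..<k} (\<lambda>_. borel))" for j
    by (cases "j < k") simp_all
qed auto

lemma nn_integral_std_normal_seq_shift_prefix: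
  assumes H [measurable]: "H \<in> borel_measurable (PiM UNIV (\<lambda>_::nat. borel :: real measure))"
  shows "(\<integral>\<^sup>+g. H (\<lambda>j. if j < k then t + g j else 0) \<partial>PiM UNIV (\<lambda>_. std_normal))
       = (\<integral>\<^sup>+g. H (\<lambda>j. if j < k then g j else 0) * (\<Prod>j<k. ennreal (gauss_shift_density t (g j)))
            \<partial>PiM UNIV (\<lambda>_. std_normal))"
proof -
  let ?N = "PiM {..<k} (\<lambda>_. std_normal)"
  define F where "F x = H (\<lambda>j. if j < k then x j else 0)" for x :: "nat \<Rightarrow> real"
  have sets_N: "sets ?N = sets (PiM {..<k} (\<lambda>_. borel))"
    by (rule sets_PiM_cong) auto
  have "F \<in> borel_measurable (PiM {..<k} (\<lambda>_. borel))"
    unfolding F_def by (rule measurable_compose[OF measurable_extend_by_zero H])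
  then have F: "F \<in> borel_measurable ?N"
    by (simp add: measurable_cong_sets[OF sets_N refl])
  have shift: "(\<lambda>x. \<lambda>j\<in>{..<k}. t + x j) \<in> ?N \<rightarrow>\<^sub>M ?N"
    by (rule measurable_restrict) (simp add: measurable_cong_sets[OF refl sets_std_normal])
  have "(\<lambda>x. \<Prod>j<k. ennreal (gauss_shift_density t (x j))) \<in> borel_measurable (PiM {..<k} (\<lambda>_. borel))"
    by (intro borel_measurable_prod_ennreal) (simp add: measurable_PiM_component_rev)
  then have weight: "(\<lambda>x. \<Prod>j<k. ennreal (gauss_shift_density t (x j))) \<in> borel_measurable ?N"
    by (simp add: measurable_cong_sets[OF sets_N refl])
  have "(\<integral>\<^sup>+g. H (\<lambda>j. if j < k then t + g j else 0) \<partial>PiM UNIV (\<lambda>_. std_normal))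
      = (\<integral>\<^sup>+g. F (\<lambda>j\<in>{..<k}. t + restrict g {..<k} j) \<partial>PiM UNIV (\<lambda>_. std_normal))"
    by (auto intro!: nn_integral_cong arg_cong[where f=H] simp: F_def)
  also have "\<dots> = (\<integral>\<^sup>+x. F (\<lambda>j\<in>{..<k}. t + x j) \<partial>?N)"
    using F shift by (intro nn_integral_PiM_restrict prob_space_std_normal) auto
  also have "\<dots> = (\<integral>\<^sup>+x. F x * (\<Prod>j<k. ennreal (gauss_shift_density t (x j))) \<partial>?N)"
    using F by (intro nn_integral_PiM_std_normal_shift) auto
  also have "\<dots> = (\<integral>\<^sup>+g. F (restrict g {..<k}) *
                     (\<Prod>j<k. ennreal (gauss_shift_density t (restrict g {..<k} j))) \<partial>PiM UNIV (\<lambda>_. std_normal))"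
    using F weight by (intro nn_integral_PiM_restrict[symmetric] prob_space_std_normal) auto
  also have "\<dots> = (\<integral>\<^sup>+g. H (\<lambda>j. if j < k then g j else 0) * (\<Prod>j<k. ennreal (gauss_shift_density t (g j)))
                     \<partial>PiM UNIV (\<lambda>_. std_normal))"
  proof (intro nn_integral_cong)
    fix g :: "nat \<Rightarrow> real"
    have "(\<lambda>j. if j < k then restrict g {..<k} j else 0) = (\<lambda>j. if j < k then g j else 0)"
      by auto
    then show "F (restrict g {..<k}) * (\<Prod>j<k. ennreal (gauss_shift_density t (restrict g {..<k} j)))
        = H (\<lambda>j. if j < k then g j else 0) * (\<Prod>j<k. ennreal (gauss_shift_density t (g j)))"
      by (simp add: F_def)
  qed
  finally show ?thesis .
qed

lemma nn_integral_std_normal_seq_prod_shift: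
  "(\<integral>\<^sup>+g. (\<Prod>j<k. gauss_shift_density b (a + g j)) \<partial>PiM UNIV (\<lambda>_. std_normal)) = ennreal (exp (a * b) ^ k)"
proof -
  interpret product_prob_space "\<lambda>_::nat. std_normal" UNIV
    by (rule product_prob_spaceI) (rule prob_space_std_normal)
  define F where "F x = (\<Prod>j<k. ennreal (gauss_shift_density b (a + x j)))" for x :: "nat \<Rightarrow> real"
  have sets_N: "sets (PiM {..<k} (\<lambda>_. std_normal)) = sets (PiM {..<k} (\<lambda>_. borel))"
    by (rule sets_PiM_cong) auto
  have "F \<in> borel_measurable (PiM {..<k} (\<lambda>_. borel))"
    unfolding F_def by (intro borel_measurable_prod_ennreal) (simp add: measurable_PiM_component_rev)
  then have F: "F \<in> borel_measurable (PiM {..<k} (\<lambda>_. std_normal))"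
    by (simp add: measurable_cong_sets[OF sets_N refl])
  have "(\<integral>\<^sup>+g. (\<Prod>j<k. gauss_shift_density b (a + g j)) \<partial>PiM UNIV (\<lambda>_. std_normal))
      = (\<integral>\<^sup>+g. F (restrict g {..<k}) \<partial>PiM UNIV (\<lambda>_. std_normal))"
    by (intro nn_integral_cong) (simp add: F_def prod_ennreal)
  also have "\<dots> = (\<integral>\<^sup>+x. F x \<partial>PiM {..<k} (\<lambda>_. std_normal))"
    using F by (intro nn_integral_PiM_restrict prob_space_std_normal) auto
  also have "\<dots> = (\<Prod>j<k. \<integral>\<^sup>+y. gauss_shift_density b (a + y) \<partial>std_normal)"
    unfolding F_def by (rule product_nn_integral_prod) auto
  also have "\<dots> = ennreal (exp (a * b) ^ k)"
    by (simp add: nn_integral_gauss_shift_density prod_ennreal ennreal_power)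
  finally show ?thesis .
qed

section \<open>Likelihood ratios of the observations\<close>

definition noisy_obs :: "real \<Rightarrow> nat \<times> (nat \<Rightarrow> real) \<Rightarrow> nat \<times> (nat \<Rightarrow> real)" where
  "noisy_obs t = (\<lambda>(k, g). (k, \<lambda>j. if j < k then t + g j else 0))"

abbreviation count_noise :: "real \<Rightarrow> (nat \<times> (nat \<Rightarrow> real)) measure" where
  "count_noise lam \<equiv> measure_pmf (poisson_pmf lam) \<Otimes>\<^sub>M PiM UNIV (\<lambda>_. std_normal)"

lemma obs_coord_eq_distr: "obs_coord lam t = distr (count_noise lam) obs_space (noisy_obs t)"
  unfolding obs_coord_def noisy_obs_def ..

lemma measurable_noisy_obs_borel [measurable]:
  "noisy_obs t \<in> count_space UNIV \<Otimes>\<^sub>M PiM UNIV (\<lambda>_. borel) \<rightarrow>\<^sub>M obs_space"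
  unfolding noisy_obs_def
proof (rule measurable_pair_measure_countable1)
  fix k :: nat
  have "(\<lambda>g::nat \<Rightarrow> real. \<lambda>j. if j < k then t + g j else 0) \<in> PiM UNIV (\<lambda>_. borel) \<rightarrow>\<^sub>M PiM UNIV (\<lambda>_. borel)"
  proof (rule measurable_PiM_single')
    show "(\<lambda>g. if j < k then t + g j else 0) \<in> borel_measurable (PiM UNIV (\<lambda>_. borel))" for j
      by (cases "j < k") simp_all
  qed auto
  then show "(\<lambda>g. case (k, g) of (k, g) \<Rightarrow> (k, \<lambda>j. if j < k then t + g j else 0))
      \<in> PiM UNIV (\<lambda>_. borel) \<rightarrow>\<^sub>M obs_space"
    unfolding obs_space_def by simp
qed simp

lemma measurable_noisy_obs: "noisy_obs t \<in> count_noise lam \<rightarrow>\<^sub>M obs_space"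
proof -
  have sets_eq: "sets (count_noise lam) = sets (count_space UNIV \<Otimes>\<^sub>M PiM UNIV (\<lambda>_::nat. borel :: real measure))"
    by (intro sets_pair_measure_cong sets_PiM_cong) auto
  show ?thesis
    using measurable_noisy_obs_borel by (simp add: measurable_cong_sets[OF sets_eq refl])
qed

lemma measurable_comp_noisy_obs:
  "f \<in> borel_measurable obs_space \<Longrightarrow> (\<lambda>x. f (noisy_obs t x)) \<in> borel_measurable (count_noise lam)"
  using measurable_compose[OF measurable_noisy_obs] .

lemma prob_space_obs_coord: "prob_space (obs_coord lam t)"
proof -
  have "prob_space (count_noise lam)"
    by (intro prob_space_pair prob_space_measure_pmf prob_space_PiM prob_space_std_normal)
  then show ?thesis
    unfolding obs_coord_eq_distr by (rule prob_space.prob_space_distr[OF _ measurable_noisy_obs])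
qed

lemma sets_obs_coord [simp]: "sets (obs_coord lam t) = sets obs_space"
  by (simp add: obs_coord_def)

definition coord_lr :: "real \<Rightarrow> nat \<times> (nat \<Rightarrow> real) \<Rightarrow> real" where
  "coord_lr t z = (\<Prod>j<fst z. gauss_shift_density t (snd z j))"

lemma coord_lr_nonneg [simp]: "0 \<le> coord_lr t z"
  unfolding coord_lr_def by (intro prod_nonneg) simp

lemma coord_lr_measurable [measurable]: "coord_lr t \<in> borel_measurable obs_space"
  unfolding obs_space_def
proof (rule measurable_pair_measure_countable1)
  show "(\<lambda>g. coord_lr t (k, g)) \<in> borel_measurable (PiM UNIV (\<lambda>_. borel))" for k
    unfolding coord_lr_def by simp
qed simp

lemma nn_integral_obs_coord:
  assumes h [measurable]: "h \<in> borel_measurable obs_space"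
  shows "(\<integral>\<^sup>+z. h z \<partial>obs_coord lam t) = (\<integral>\<^sup>+z. h z * coord_lr t z \<partial>obs_coord lam 0)"
proof -
  interpret N: prob_space "PiM UNIV (\<lambda>_::nat. std_normal)"
    by (intro prob_space_PiM prob_space_std_normal)
  have h_k: "(\<lambda>g. h (k, g)) \<in> borel_measurable (PiM UNIV (\<lambda>_::nat. borel :: real measure))" for k
    using h unfolding obs_space_def by measurable
  have "(\<integral>\<^sup>+z. h z \<partial>obs_coord lam t) = (\<integral>\<^sup>+x. h (noisy_obs t x) \<partial>count_noise lam)"
    unfolding obs_coord_eq_distr by (rule nn_integral_distr[OF measurable_noisy_obs]) simp
  also have "\<dots> = (\<integral>\<^sup>+k. \<integral>\<^sup>+g. h (noisy_obs t (k, g)) \<partial>PiM UNIV (\<lambda>_. std_normal) \<partial>measure_pmf (poisson_pmf lam))"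
    by (intro N.nn_integral_fst[symmetric] measurable_comp_noisy_obs h)
  also have "\<dots> = (\<integral>\<^sup>+k. \<integral>\<^sup>+g. h (noisy_obs 0 (k, g)) * coord_lr t (noisy_obs 0 (k, g))
                      \<partial>PiM UNIV (\<lambda>_. std_normal) \<partial>measure_pmf (poisson_pmf lam))"
    using nn_integral_std_normal_seq_shift_prefix[OF h_k]
    by (simp add: noisy_obs_def coord_lr_def prod_ennreal cong: if_cong)
  also have "\<dots> = (\<integral>\<^sup>+x. h (noisy_obs 0 x) * coord_lr t (noisy_obs 0 x) \<partial>count_noise lam)"
    by (intro N.nn_integral_fst measurable_comp_noisy_obs[where f="\<lambda>z. h z * coord_lr t z"]) measurable
  also have "\<dots> = (\<integral>\<^sup>+z. h z * coord_lr t z \<partial>obs_coord lam 0)"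
    unfolding obs_coord_eq_distr by (rule nn_integral_distr[OF measurable_noisy_obs, symmetric]) simp
  finally show ?thesis .
qed

lemma obs_coord_density:
  "obs_coord lam t = density (obs_coord lam 0) (\<lambda>z. ennreal (coord_lr t z))"
proof (rule measure_eqI)
  fix A assume "A \<in> sets (obs_coord lam t)"
  then have A [measurable]: "A \<in> sets obs_space" by simp
  have "emeasure (obs_coord lam t) A = (\<integral>\<^sup>+z. indicator A z \<partial>obs_coord lam t)"
    by (simp add: nn_integral_indicator)
  also have "\<dots> = (\<integral>\<^sup>+z. indicator A z * ennreal (coord_lr t z) \<partial>obs_coord lam 0)"
    by (rule nn_integral_obs_coord) simp
  also have "\<dots> = emeasure (density (obs_coord lam 0) (\<lambda>z. ennreal (coord_lr t z))) A"
    by (subst emeasure_density)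
       (auto simp: mult.commute measurable_cong_sets[OF sets_obs_coord refl] intro!: nn_integral_cong)
  finally show "emeasure (obs_coord lam t) A = emeasure (density (obs_coord lam 0) (\<lambda>z. ennreal (coord_lr t z))) A" .
qed simp

lemma nn_integral_poisson_power:
  fixes q :: real
  assumes lam: "0 < lam" and q: "0 \<le> q"
  shows "(\<integral>\<^sup>+k. ennreal (q ^ k) \<partial>measure_pmf (poisson_pmf lam)) = ennreal (exp (lam * (q - 1)))"
proof -
  have "(\<lambda>k. exp (-lam) * ((lam * q) ^ k /\<^sub>R fact k)) sums (exp (-lam) * exp (lam * q))"
    by (intro sums_mult exp_converges)
  moreover have "exp (-lam) * ((lam * q) ^ k /\<^sub>R fact k) = pmf (poisson_pmf lam) k * q ^ k" for k
    using lam by (simp add: power_mult_distrib divide_inverse algebra_simps)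
  moreover have "exp (-lam) * exp (lam * q) = exp (lam * (q - 1))"
    by (simp add: exp_add[symmetric] algebra_simps)
  ultimately have sums: "(\<lambda>k. pmf (poisson_pmf lam) k * q ^ k) sums exp (lam * (q - 1))"
    by simp
  have "(\<integral>\<^sup>+k. ennreal (q ^ k) \<partial>measure_pmf (poisson_pmf lam)) = (\<Sum>k. ennreal (pmf (poisson_pmf lam) k * q ^ k))"
    unfolding nn_integral_measure_pmf nn_integral_count_space_nat
    by (simp add: ennreal_mult q)
  also have "\<dots> = ennreal (exp (lam * (q - 1)))"
    using sums q by (intro suminf_ennreal_eq) auto
  finally show ?thesis .
qed

lemma nn_integral_coord_lr_mult:
  assumes lam: "0 < lam"
  shows "(\<integral>\<^sup>+z. ennreal (coord_lr a z * coord_lr b z) \<partial>obs_coord lam 0)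
       = ennreal (exp (lam * (exp (a * b) - 1)))"
proof -
  interpret N: prob_space "PiM UNIV (\<lambda>_::nat. std_normal)"
    by (intro prob_space_PiM prob_space_std_normal)
  \<comment> \<open>given k observations, each contributes a Gaussian moment generating factor exp(a b)\<close>
  have "(\<integral>\<^sup>+z. coord_lr b z \<partial>obs_coord lam a) = (\<integral>\<^sup>+z. coord_lr b z * ennreal (coord_lr a z) \<partial>obs_coord lam 0)"
    by (rule nn_integral_obs_coord) measurable
  then have "(\<integral>\<^sup>+z. ennreal (coord_lr a z * coord_lr b z) \<partial>obs_coord lam 0) = (\<integral>\<^sup>+z. coord_lr b z \<partial>obs_coord lam a)"
    by (simp add: ennreal_mult mult.commute)
  also have "\<dots> = (\<integral>\<^sup>+x. coord_lr b (noisy_obs a x) \<partial>count_noise lam)"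
    unfolding obs_coord_eq_distr by (rule nn_integral_distr[OF measurable_noisy_obs]) simp
  also have "\<dots> = (\<integral>\<^sup>+k. \<integral>\<^sup>+g. coord_lr b (noisy_obs a (k, g)) \<partial>PiM UNIV (\<lambda>_. std_normal) \<partial>measure_pmf (poisson_pmf lam))"
    by (intro N.nn_integral_fst[symmetric] measurable_comp_noisy_obs) measurable
  also have "\<dots> = (\<integral>\<^sup>+k. ennreal (exp (a * b) ^ k) \<partial>measure_pmf (poisson_pmf lam))"
    by (simp add: noisy_obs_def coord_lr_def nn_integral_std_normal_seq_prod_shift)
  also have "\<dots> = ennreal (exp (lam * (exp (a * b) - 1)))"
    using lam by (intro nn_integral_poisson_power) auto
  finally show ?thesis .
qed

lemma sets_obs_law [simp, measurable_cong]: "sets (obs_law d lam \<theta>) = sets (obs_full_space d)"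
  unfolding obs_law_def obs_full_space_def by (rule sets_PiM_cong) auto

lemma space_obs_law [simp]: "space (obs_law d lam \<theta>) = space (obs_full_space d)"
  using sets_eq_imp_space_eq[OF sets_obs_law] .

lemma prob_space_obs_law: "prob_space (obs_law d lam \<theta>)"
  unfolding obs_law_def by (intro prob_space_PiM prob_space_obs_coord)

definition obs_lr :: "nat \<Rightarrow> (nat \<Rightarrow> real) \<Rightarrow> (nat \<Rightarrow> nat \<times> (nat \<Rightarrow> real)) \<Rightarrow> real" where
  "obs_lr d \<theta> y = (\<Prod>i<d. coord_lr (\<theta> i) (y i))"

lemma obs_lr_nonneg [simp]: "0 \<le> obs_lr d \<theta> y"
  unfolding obs_lr_def by (intro prod_nonneg) simp

lemma obs_lr_measurable [measurable]: "obs_lr d \<theta> \<in> borel_measurable (obs_full_space d)"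
  unfolding obs_lr_def obs_full_space_def
  by (rule borel_measurable_prod) (auto intro!: measurable_PiM_component_rev)

lemma obs_law_density: "obs_law d lam \<theta> = density (obs_law d lam (\<lambda>_. 0)) (\<lambda>y. ennreal (obs_lr d \<theta> y))"
proof -
  have "obs_law d lam \<theta> = PiM {..<d} (\<lambda>i. density (obs_coord lam 0) (\<lambda>z. ennreal (coord_lr (\<theta> i) z)))"
    unfolding obs_law_def by (intro PiM_cong refl) (rule obs_coord_density)
  also have "\<dots> = density (PiM {..<d} (\<lambda>i. obs_coord lam 0)) (\<lambda>y. \<Prod>i<d. ennreal (coord_lr (\<theta> i) (y i)))"
  proof (rule PiM_density)
    show "(\<lambda>z. ennreal (coord_lr (\<theta> i) z)) \<in> borel_measurable (obs_coord lam 0)" for i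
      by (simp add: measurable_cong_sets[OF sets_obs_coord refl])
    show "prob_space (density (obs_coord lam 0) (\<lambda>z. ennreal (coord_lr (\<theta> i) z)))" for i
      using prob_space_obs_coord[of lam "\<theta> i"] by (simp only: obs_coord_density[of lam "\<theta> i"])
  qed (simp_all add: prob_space_obs_coord)
  also have "\<dots> = density (obs_law d lam (\<lambda>_. 0)) (\<lambda>y. ennreal (obs_lr d \<theta> y))"
    unfolding obs_law_def obs_lr_def by (simp add: prod_ennreal)
  finally show ?thesis .
qed

lemma has_bochner_integral_obs_lr_indicator:
  assumes A [measurable]: "A \<in> sets (obs_full_space d)"
  shows "has_bochner_integral (obs_law d lam (\<lambda>_. 0)) (\<lambda>y. obs_lr d \<theta> y * indicator A y)
           (measure (obs_law d lam \<theta>) A)"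
proof (rule has_bochner_integral_nn_integral)
  interpret prob_space "obs_law d lam \<theta>" by (rule prob_space_obs_law)
  have "ennreal (measure (obs_law d lam \<theta>) A) = emeasure (obs_law d lam \<theta>) A"
    by (simp add: emeasure_eq_measure)
  also have "\<dots> = emeasure (density (obs_law d lam (\<lambda>_. 0)) (\<lambda>y. ennreal (obs_lr d \<theta> y))) A"
    using obs_law_density[of d lam \<theta>] by simp
  also have "\<dots> = (\<integral>\<^sup>+y. ennreal (obs_lr d \<theta> y) * indicator A y \<partial>obs_law d lam (\<lambda>_. 0))"
    by (rule emeasure_density) measurable
  finally show "(\<integral>\<^sup>+y. ennreal (obs_lr d \<theta> y * indicator A y) \<partial>obs_law d lam (\<lambda>_. 0))
      = ennreal (measure (obs_law d lam \<theta>) A)"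
    by (simp add: indicator_mult_ennreal mult.commute)
qed auto

lemma has_bochner_integral_obs_lr:
  "has_bochner_integral (obs_law d lam (\<lambda>_. 0)) (obs_lr d \<theta>) 1"
proof -
  interpret prob_space "obs_law d lam \<theta>" by (rule prob_space_obs_law)
  have "has_bochner_integral (obs_law d lam (\<lambda>_. 0)) (\<lambda>y. obs_lr d \<theta> y * indicator (space (obs_full_space d)) y)
          (measure (obs_law d lam \<theta>) (space (obs_full_space d)))"
    by (intro has_bochner_integral_obs_lr_indicator) simp
  moreover have "measure (obs_law d lam \<theta>) (space (obs_full_space d)) = 1"
    using prob_space by simp
  ultimately show ?thesis
    by (subst has_bochner_integral_cong[OF refl _ refl, where g="\<lambda>y. obs_lr d \<theta> y * indicator (space (obs_full_space d)) y"])
       simp_all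
qed

lemma has_bochner_integral_obs_lr_mult:
  assumes "0 < lam"
  shows "has_bochner_integral (obs_law d lam (\<lambda>_. 0)) (\<lambda>y. obs_lr d \<theta> y * obs_lr d \<theta>' y)
           (\<Prod>i<d. exp (lam * (exp (\<theta> i * \<theta>' i) - 1)))"
proof (rule has_bochner_integral_nn_integral)
  interpret product_prob_space "\<lambda>_::nat. obs_coord lam 0" "{..<d}"
    by (rule product_prob_spaceI) (rule prob_space_obs_coord)
  have "(\<integral>\<^sup>+y. ennreal (obs_lr d \<theta> y * obs_lr d \<theta>' y) \<partial>obs_law d lam (\<lambda>_. 0))
      = (\<integral>\<^sup>+y. (\<Prod>i<d. ennreal (coord_lr (\<theta> i) (y i) * coord_lr (\<theta>' i) (y i))) \<partial>PiM {..<d} (\<lambda>_. obs_coord lam 0))"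
    unfolding obs_law_def obs_lr_def by (simp add: prod_ennreal prod.distrib)
  also have "\<dots> = (\<Prod>i<d. \<integral>\<^sup>+z. ennreal (coord_lr (\<theta> i) z * coord_lr (\<theta>' i) z) \<partial>obs_coord lam 0)"
    by (rule product_nn_integral_prod) (auto simp: measurable_cong_sets[OF sets_obs_coord refl])
  also have "\<dots> = ennreal (\<Prod>i<d. exp (lam * (exp (\<theta> i * \<theta>' i) - 1)))"
    using assms by (simp add: nn_integral_coord_lr_mult prod_ennreal)
  finally show "(\<integral>\<^sup>+y. ennreal (obs_lr d \<theta> y * obs_lr d \<theta>' y) \<partial>obs_law d lam (\<lambda>_. 0))
      = ennreal (\<Prod>i<d. exp (lam * (exp (\<theta> i * \<theta>' i) - 1)))" .
qed (auto intro: prod_nonneg)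

section \<open>Chi-square bound for mixtures\<close>

lemma (in prob_space) integral_mult_indicator_le_chi_square:
  fixes f :: "'a \<Rightarrow> real"
  assumes f: "integrable M f" "integrable M (\<lambda>x. f x * f x)" "expectation f = 1"
    and A: "A \<in> events"
  shows "(\<integral>x. f x * indicator A x \<partial>M) - prob A \<le> 1/8 + 2 * (expectation (\<lambda>x. f x * f x) - 1)"
proof -
  have ind: "integrable M (indicator A :: 'a \<Rightarrow> real)"
    using A by (intro integrable_const_bound[where B=1]) auto
  \<comment> \<open>on A this is u \<le> 2 u^2 + 1/8 for u = f x - 1\<close>
  have pointwise: "f x * indicator A x - indicator A x \<le> 2 * (f x * f x) - 4 * f x + (2 + 1/8)" for x
  proof -
    have "0 \<le> 2 * (f x - 5/4)\<^sup>2" "0 \<le> 2 * (f x - 1)\<^sup>2" by simp_all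
    then show ?thesis by (cases "x \<in> A") (auto simp: power2_eq_square algebra_simps)
  qed
  have "(\<integral>x. f x * indicator A x \<partial>M) - prob A = (\<integral>x. f x * indicator A x - indicator A x \<partial>M)"
    using f A ind by (simp add: integrable_real_mult_indicator)
  also have "\<dots> \<le> (\<integral>x. 2 * (f x * f x) - 4 * f x + (2 + 1/8) \<partial>M)"
    using f A ind pointwise by (intro integral_mono) (auto simp: integrable_real_mult_indicator)
  also have "\<dots> = 2 * expectation (\<lambda>x. f x * f x) - 4 + (2 + 1/8)"
    using f by (simp add: prob_space)
  finally show ?thesis by simp
qed

lemma obs_law_mixture_le_chi_square:
  fixes w :: "'b \<Rightarrow> real" and \<theta> :: "'b \<Rightarrow> nat \<Rightarrow> real"
  assumes lam: "0 < lam" and w: "sum w B = 1" and A: "A \<in> sets (obs_full_space d)"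
  shows "(\<Sum>b\<in>B. w b * measure (obs_law d lam (\<theta> b)) A) - measure (obs_law d lam (\<lambda>_. 0)) A
     \<le> 1/8 + 2 * ((\<Sum>b\<in>B. \<Sum>b'\<in>B. w b * w b' * (\<Prod>i<d. exp (lam * (exp (\<theta> b i * \<theta> b' i) - 1)))) - 1)"
proof -
  let ?P = "obs_law d lam (\<lambda>_. 0)"
  interpret prob_space ?P by (rule prob_space_obs_law)
  define L where "L y = (\<Sum>b\<in>B. w b * obs_lr d (\<theta> b) y)" for y
  have LA: "has_bochner_integral ?P (\<lambda>y. L y * indicator A y) (\<Sum>b\<in>B. w b * measure (obs_law d lam (\<theta> b)) A)"
    unfolding L_def sum_distrib_right mult.assoc using A
    by (intro has_bochner_integral_sum has_bochner_integral_mult_right has_bochner_integral_obs_lr_indicator)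
  have L: "has_bochner_integral ?P L 1"
    unfolding L_def w[symmetric]
    by (intro has_bochner_integral_sum has_bochner_integral_mult_right[where c="w _" and x=1, simplified]
              has_bochner_integral_obs_lr)
  have square: "(\<lambda>y. L y * L y)
      = (\<lambda>y. \<Sum>b\<in>B. \<Sum>b'\<in>B. w b * w b' * (obs_lr d (\<theta> b) y * obs_lr d (\<theta> b') y))"
    by (simp add: L_def sum_distrib_left sum_distrib_right ac_simps)
  have LL: "has_bochner_integral ?P (\<lambda>y. L y * L y)
      (\<Sum>b\<in>B. \<Sum>b'\<in>B. w b * w b' * (\<Prod>i<d. exp (lam * (exp (\<theta> b i * \<theta> b' i) - 1))))"
    unfolding square using lam
    by (intro has_bochner_integral_sum has_bochner_integral_mult_right has_bochner_integral_obs_lr_mult)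
  show ?thesis
    using integral_mult_indicator_le_chi_square[of L A] A L LL LA
    by (simp add: has_bochner_integral_iff)
qed

section \<open>The sparse spike prior\<close>

lemma sum_PiE_UNIV_prod:
  fixes f :: "'a::finite \<Rightarrow> 'b::comm_semiring_1"
  assumes "finite I"
  shows "(\<Sum>b\<in>I \<rightarrow>\<^sub>E UNIV. \<Prod>i\<in>I. f (b i)) = (\<Sum>x\<in>UNIV. f x) ^ card I"
  using prod_sum_PiE[of I "\<lambda>_. UNIV" "\<lambda>_. f"] assms by simp

lemma sum_PiE_UNIV_pair_prod:
  fixes g :: "'a::finite \<Rightarrow> 'a \<Rightarrow> 'b::comm_semiring_1"
  assumes "finite I"
  shows "(\<Sum>b\<in>I \<rightarrow>\<^sub>E UNIV. \<Sum>b'\<in>I \<rightarrow>\<^sub>E UNIV. \<Prod>i\<in>I. g (b i) (b' i)) = (\<Sum>x\<in>UNIV. \<Sum>y\<in>UNIV. g x y) ^ card I"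
proof -
  have "(\<Sum>b\<in>I \<rightarrow>\<^sub>E UNIV. \<Sum>b'\<in>I \<rightarrow>\<^sub>E UNIV. \<Prod>i\<in>I. g (b i) (b' i))
      = (\<Sum>b\<in>I \<rightarrow>\<^sub>E UNIV. \<Prod>i\<in>I. \<Sum>y\<in>UNIV. g (b i) y)"
    using assms by (intro sum.cong refl prod_sum_PiE[symmetric]) auto
  also have "\<dots> = (\<Sum>x\<in>UNIV. \<Sum>y\<in>UNIV. g x y) ^ card I"
    using assms by (rule sum_PiE_UNIV_prod)
  finally show ?thesis .
qed

definition bernoulli_weight :: "nat \<Rightarrow> real \<Rightarrow> (nat \<Rightarrow> bool) \<Rightarrow> real" where
  "bernoulli_weight d p b = (\<Prod>i<d. if b i then p else 1 - p)"

definition spike :: "nat \<Rightarrow> real \<Rightarrow> (nat \<Rightarrow> bool) \<Rightarrow> nat \<Rightarrow> real" where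
  "spike d t b = (\<lambda>i. if i < d \<and> b i then t else 0)"

definition spike_second_moment :: "nat \<Rightarrow> real \<Rightarrow> real \<Rightarrow> real \<Rightarrow> real" where
  "spike_second_moment d lam p t = (1 + p\<^sup>2 * (exp (lam * (exp (t\<^sup>2) - 1)) - 1)) ^ d"

definition spike_near_mass :: "nat \<Rightarrow> real \<Rightarrow> real \<Rightarrow> real \<Rightarrow> real" where
  "spike_near_mass d p t \<epsilon> =
     (\<Sum>b\<in>{b \<in> {..<d} \<rightarrow>\<^sub>E UNIV. l2norm d (spike d t b) \<le> \<epsilon>}. bernoulli_weight d p b)"

lemma bernoulli_weight_nonneg: "0 \<le> p \<Longrightarrow> p \<le> 1 \<Longrightarrow> 0 \<le> bernoulli_weight d p b"
  unfolding bernoulli_weight_def by (intro prod_nonneg) auto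

lemma sum_bernoulli_weight: "(\<Sum>b\<in>{..<d} \<rightarrow>\<^sub>E UNIV. bernoulli_weight d p b) = 1"
  unfolding bernoulli_weight_def
  using sum_PiE_UNIV_prod[of "{..<d}" "\<lambda>\<beta>. if \<beta> then p else 1 - p"] by (simp add: UNIV_bool)

lemma sum_bernoulli_weight_spike_second_moment:
  "(\<Sum>b\<in>{..<d} \<rightarrow>\<^sub>E UNIV. \<Sum>b'\<in>{..<d} \<rightarrow>\<^sub>E UNIV. bernoulli_weight d p b * bernoulli_weight d p b' *
      (\<Prod>i<d. exp (lam * (exp (spike d t b i * spike d t b' i) - 1))))
   = spike_second_moment d lam p t"
proof -
  define g where "g \<beta> \<beta>' = (if \<beta> then p else 1 - p) * (if \<beta>' then p else 1 - p) *
      exp (lam * (exp ((if \<beta> then t else 0) * (if \<beta>' then t else 0)) - 1))" for \<beta> \<beta>' :: bool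
  have "(\<Sum>b\<in>{..<d} \<rightarrow>\<^sub>E UNIV. \<Sum>b'\<in>{..<d} \<rightarrow>\<^sub>E UNIV. bernoulli_weight d p b * bernoulli_weight d p b' *
          (\<Prod>i<d. exp (lam * (exp (spike d t b i * spike d t b' i) - 1))))
      = (\<Sum>b\<in>{..<d} \<rightarrow>\<^sub>E UNIV. \<Sum>b'\<in>{..<d} \<rightarrow>\<^sub>E UNIV. \<Prod>i<d. g (b i) (b' i))"
    by (intro sum.cong refl) (simp add: bernoulli_weight_def spike_def g_def prod.distrib)
  also have "\<dots> = (\<Sum>x\<in>UNIV. \<Sum>y\<in>UNIV. g x y) ^ d"
    by (simp add: sum_PiE_UNIV_pair_prod)
  also have "(\<Sum>x\<in>UNIV. \<Sum>y\<in>UNIV. g x y) = 1 + p\<^sup>2 * (exp (lam * (exp (t\<^sup>2) - 1)) - 1)"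
    by (simp add: UNIV_bool g_def power2_eq_square algebra_simps)
  finally show ?thesis unfolding spike_second_moment_def .
qed

lemma l2norm_spike: "l2norm d (spike d t b) = sqrt (real (card {i \<in> {..<d}. b i}) * t\<^sup>2)"
proof -
  have "(\<Sum>i<d. (spike d t b i)\<^sup>2) = (\<Sum>i\<in>{..<d}. if b i then t\<^sup>2 else 0)"
    unfolding spike_def by (intro sum.cong) auto
  also have "\<dots> = (\<Sum>i\<in>{i \<in> {..<d}. b i}. t\<^sup>2)"
    by (rule sum.inter_filter[symmetric]) simp
  finally show ?thesis unfolding l2norm_def by simp
qed

lemma spike_near_indicator_le:
  assumes t: "0 < t"
  shows "(if l2norm d (spike d t b) \<le> \<epsilon> then 1 else 0)
      \<le> exp (2 * \<epsilon>\<^sup>2 / t\<^sup>2) * (\<Prod>i<d. if b i then exp (-2) else 1)"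
proof -
  let ?n = "real (card {i \<in> {..<d}. b i})"
  have "(\<Prod>i<d. if b i then exp (-2) else (1::real)) = (\<Prod>i\<in>{i \<in> {..<d}. b i}. exp (-2))"
    using prod.inter_filter[of "{..<d}" "\<lambda>_. exp (-2::real)" b] by simp
  also have "\<dots> = exp (-2 * ?n)"
    by (simp add: exp_of_nat_mult[symmetric] mult.commute)
  finally have prod_eq: "(\<Prod>i<d. if b i then exp (-2) else (1::real)) = exp (-2 * ?n)" .
  show ?thesis
  proof (cases "l2norm d (spike d t b) \<le> \<epsilon>")
    case True
    then have "?n * t\<^sup>2 \<le> \<epsilon>\<^sup>2"
      by (intro sqrt_le_D) (simp only: l2norm_spike[symmetric])
    then have "0 \<le> 2 * \<epsilon>\<^sup>2 / t\<^sup>2 + (-2 * ?n)"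
      using t by (simp add: field_simps)
    then have "1 \<le> exp (2 * \<epsilon>\<^sup>2 / t\<^sup>2) * exp (-2 * ?n)"
      by (simp add: exp_add[symmetric])
    then show ?thesis using True by (simp add: prod_eq)
  qed (simp add: prod_eq)
qed

lemma spike_near_mass_le:
  assumes t: "0 < t" and p: "0 \<le> p" "p \<le> 1"
  shows "spike_near_mass d p t \<epsilon> \<le> exp (2 * \<epsilon>\<^sup>2 / t\<^sup>2) * (1 - p + p * exp (-2)) ^ d"
proof -
  have "spike_near_mass d p t \<epsilon>
      = (\<Sum>b\<in>{..<d} \<rightarrow>\<^sub>E UNIV. if l2norm d (spike d t b) \<le> \<epsilon> then bernoulli_weight d p b else 0)"
    unfolding spike_near_mass_def by (simp add: sum.inter_filter finite_PiE)
  also have "\<dots> \<le> (\<Sum>b\<in>{..<d} \<rightarrow>\<^sub>E UNIV. bernoulli_weight d p b *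
                    (exp (2 * \<epsilon>\<^sup>2 / t\<^sup>2) * (\<Prod>i<d. if b i then exp (-2) else 1)))"
  proof (intro sum_mono)
    fix b :: "nat \<Rightarrow> bool"
    have "(if l2norm d (spike d t b) \<le> \<epsilon> then bernoulli_weight d p b else 0)
        = bernoulli_weight d p b * (if l2norm d (spike d t b) \<le> \<epsilon> then 1 else 0)"
      by simp
    also have "\<dots> \<le> bernoulli_weight d p b * (exp (2 * \<epsilon>\<^sup>2 / t\<^sup>2) * (\<Prod>i<d. if b i then exp (-2) else 1))"
      using p t by (intro mult_left_mono spike_near_indicator_le bernoulli_weight_nonneg)
    finally show "(if l2norm d (spike d t b) \<le> \<epsilon> then bernoulli_weight d p b else 0)
        \<le> bernoulli_weight d p b * (exp (2 * \<epsilon>\<^sup>2 / t\<^sup>2) * (\<Prod>i<d. if b i then exp (-2) else 1))" .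
  qed
  also have "\<dots> = exp (2 * \<epsilon>\<^sup>2 / t\<^sup>2) *
      (\<Sum>b\<in>{..<d} \<rightarrow>\<^sub>E UNIV. \<Prod>i<d. (if b i then p else 1 - p) * (if b i then exp (-2) else 1))"
    by (simp add: sum_distrib_left bernoulli_weight_def prod.distrib ac_simps)
  also have "\<dots> = exp (2 * \<epsilon>\<^sup>2 / t\<^sup>2) * (1 - p + p * exp (-2)) ^ d"
    using sum_PiE_UNIV_prod[of "{..<d}" "\<lambda>\<beta>. (if \<beta> then p else 1 - p) * (if \<beta> then exp (-2) else 1)"]
    by (simp add: UNIV_bool)
  finally show ?thesis .
qed

lemma vecs_subset_monotone_diff: "vecs d \<subseteq> monotone_diff d"
proof
  fix \<theta> assume \<theta>: "\<theta> \<in> vecs d"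
  define K where "K = (\<Sum>i<d. \<bar>\<theta> i\<bar>)"
  \<comment> \<open>a ramp steeper than every gap of \<theta> makes \<theta> + ramp monotone\<close>
  define ramp where "ramp i = (if i < d then K * real i else 0)" for i
  have K: "0 \<le> K" unfolding K_def by (intro sum_nonneg) auto
  have "(\<lambda>i. \<theta> i + ramp i) \<in> monotone_cone d"
    unfolding monotone_cone_def vecs_def
  proof (intro CollectI conjI allI impI)
    fix i j :: nat assume ij: "i \<le> j" "j < d"
    show "\<theta> i + ramp i \<le> \<theta> j + ramp j"
    proof (cases "i = j")
      case False
      then have "\<bar>\<theta> i\<bar> + \<bar>\<theta> j\<bar> = (\<Sum>k\<in>{i, j}. \<bar>\<theta> k\<bar>)" by simp
      also have "\<dots> \<le> K" unfolding K_def using ij by (intro sum_mono2) auto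
      finally have "\<theta> i - \<theta> j \<le> K" by linarith
      moreover have "K \<le> K * (real j - real i)"
        using False ij K by (simp add: mult_le_cancel_left1)
      ultimately show ?thesis using ij unfolding ramp_def by (simp add: algebra_simps)
    qed simp
  qed (use \<theta> in \<open>simp add: ramp_def vecs_def\<close>)
  moreover have "ramp \<in> monotone_cone d"
    unfolding monotone_cone_def vecs_def ramp_def using K by (auto intro!: mult_left_mono)
  ultimately show "\<theta> \<in> monotone_diff d"
    unfolding monotone_diff_def by (intro CollectI exI[of _ "\<lambda>i. \<theta> i + ramp i"] exI[of _ ramp]) auto
qed

lemma spike_mem_alternative:
  assumes "0 \<le> t" and "\<epsilon> < l2norm d (spike d t b)"
  shows "spike d t b \<in> monotone_diff d \<inter> pos_orthant d - enlarge d {\<lambda>_. 0} \<epsilon>"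
proof -
  have "spike d t b \<in> vecs d" by (simp add: spike_def vecs_def)
  then show ?thesis
    using assms vecs_subset_monotone_diff by (auto simp: spike_def pos_orthant_def enlarge_def)
qed

lemma test_risk_singleton_decomp:
  assumes \<psi>: "\<psi> \<in> measurable (obs_full_space d) (count_space UNIV)"
    and alt: "C - enlarge d {\<theta>\<^sub>0} \<epsilon> \<noteq> {}"
  defines "A \<equiv> {y \<in> space (obs_full_space d). \<psi> y}"
  obtains worst where "test_risk d lam \<psi> {\<theta>\<^sub>0} C \<epsilon> = measure (obs_law d lam \<theta>\<^sub>0) A + worst" "0 \<le> worst"
    "\<And>\<theta>. \<theta> \<in> C - enlarge d {\<theta>\<^sub>0} \<epsilon> \<Longrightarrow> 1 - measure (obs_law d lam \<theta>) A \<le> worst"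
proof -
  define miss where "miss \<theta> = measure (obs_law d lam \<theta>) {y \<in> space (obs_law d lam \<theta>). \<not> \<psi> y}" for \<theta>
  define worst where "worst = (SUP \<theta>\<in>C - enlarge d {\<theta>\<^sub>0} \<epsilon>. miss \<theta>)"
  have A: "A \<in> sets (obs_full_space d)"
    using \<psi> pred_def[where M="obs_full_space d" and P=\<psi>] unfolding A_def by blast
  have miss: "miss \<theta> = 1 - measure (obs_law d lam \<theta>) A" for \<theta>
  proof -
    interpret prob_space "obs_law d lam \<theta>" by (rule prob_space_obs_law)
    have "{y \<in> space (obs_law d lam \<theta>). \<not> \<psi> y} = space (obs_law d lam \<theta>) - A"
      by (auto simp: A_def)
    moreover have "A \<in> events" using A by simp
    ultimately show ?thesis unfolding miss_def using prob_compl[of A] by simp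
  qed
  have miss_bounds: "0 \<le> miss \<theta>" "miss \<theta> \<le> 1" for \<theta>
    unfolding miss_def by (simp_all add: prob_space.prob_le_1[OF prob_space_obs_law])
  have le_worst: "miss \<theta> \<le> worst" if "\<theta> \<in> C - enlarge d {\<theta>\<^sub>0} \<epsilon>" for \<theta>
    unfolding worst_def using that miss_bounds(2) by (intro cSUP_upper bdd_aboveI[where M=1]) auto
  obtain \<theta>' where "\<theta>' \<in> C - enlarge d {\<theta>\<^sub>0} \<epsilon>" using alt by blast
  then have "0 \<le> worst" using miss_bounds(1)[of \<theta>'] le_worst by fastforce
  moreover have "test_risk d lam \<psi> {\<theta>\<^sub>0} C \<epsilon> = measure (obs_law d lam \<theta>\<^sub>0) A + worst"
    unfolding test_risk_def worst_def miss_def A_def by simp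
  ultimately show ?thesis using that le_worst by (simp add: miss)
qed

lemma test_risk_ge_mixture:
  fixes w :: "'b \<Rightarrow> real" and \<theta> :: "'b \<Rightarrow> nat \<Rightarrow> real"
  assumes \<psi>: "\<psi> \<in> measurable (obs_full_space d) (count_space UNIV)"
    and w: "\<And>b. b \<in> B \<Longrightarrow> 0 \<le> w b" "sum w B = 1"
    and far: "\<And>b. b \<in> B - N \<Longrightarrow> \<theta> b \<in> C - enlarge d {\<theta>\<^sub>0} \<epsilon>"
    and alt: "C - enlarge d {\<theta>\<^sub>0} \<epsilon> \<noteq> {}"
  defines "A \<equiv> {y \<in> space (obs_full_space d). \<psi> y}"
  shows "1 - ((\<Sum>b\<in>B. w b * measure (obs_law d lam (\<theta> b)) A) - measure (obs_law d lam \<theta>\<^sub>0) A)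
           - sum w (B \<inter> N)
         \<le> test_risk d lam \<psi> {\<theta>\<^sub>0} C \<epsilon>"
proof -
  obtain worst where risk: "test_risk d lam \<psi> {\<theta>\<^sub>0} C \<epsilon> = measure (obs_law d lam \<theta>\<^sub>0) A + worst"
    and "0 \<le> worst" and le_worst: "\<And>\<theta>. \<theta> \<in> C - enlarge d {\<theta>\<^sub>0} \<epsilon> \<Longrightarrow> 1 - measure (obs_law d lam \<theta>) A \<le> worst"
    using test_risk_singleton_decomp[OF \<psi> alt] unfolding A_def by blast
  have "finite B" using w(2) by (metis sum.infinite zero_neq_one)
  have "(\<Sum>b\<in>B. w b * (1 - measure (obs_law d lam (\<theta> b)) A))
      \<le> (\<Sum>b\<in>B. w b * worst + (if b \<in> N then w b else 0))"
  proof (intro sum_mono)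
    fix b assume b: "b \<in> B"
    show "w b * (1 - measure (obs_law d lam (\<theta> b)) A) \<le> w b * worst + (if b \<in> N then w b else 0)"
    proof (cases "b \<in> N")
      case True
      have "1 - measure (obs_law d lam (\<theta> b)) A \<le> worst + 1"
        using \<open>0 \<le> worst\<close> measure_nonneg[of "obs_law d lam (\<theta> b)" A] by linarith
      then have "w b * (1 - measure (obs_law d lam (\<theta> b)) A) \<le> w b * (worst + 1)"
        using w(1)[OF b] by (rule mult_left_mono)
      with True show ?thesis by (simp add: distrib_left)
    next
      case False
      then have "w b * (1 - measure (obs_law d lam (\<theta> b)) A) \<le> w b * worst"
        using le_worst[OF far] b w(1)[OF b] by (intro mult_left_mono) auto
      with False show ?thesis by simp
    qed
  qed
  also have "\<dots> = worst + sum w (B \<inter> N)"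
    using \<open>finite B\<close> w(2) by (simp add: sum.distrib sum_distrib_right[symmetric] sum.inter_restrict)
  finally have "1 - (\<Sum>b\<in>B. w b * measure (obs_law d lam (\<theta> b)) A) \<le> worst + sum w (B \<inter> N)"
    using w(2) by (simp add: right_diff_distrib sum_subtractf)
  then show ?thesis using risk by linarith
qed

lemma test_risk_ge_spike_prior:
  assumes d: "1 \<le> d" and lam: "0 < lam" and \<epsilon>: "0 < \<epsilon>" and p: "0 \<le> p" "p \<le> 1" and t: "0 \<le> t"
    and \<psi>: "\<psi> \<in> measurable (obs_full_space d) (count_space UNIV)"
  shows "7/8 - 2 * (spike_second_moment d lam p t - 1) - spike_near_mass d p t \<epsilon>
    \<le> test_risk d lam \<psi> {\<lambda>_. 0} (monotone_diff d \<inter> pos_orthant d) \<epsilon>"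
proof -
  let ?B = "{..<d} \<rightarrow>\<^sub>E (UNIV :: bool set)" and ?N = "{b. l2norm d (spike d t b) \<le> \<epsilon>}"
  define A where "A = {y \<in> space (obs_full_space d). \<psi> y}"
  have A: "A \<in> sets (obs_full_space d)"
    using \<psi> pred_def[where M="obs_full_space d" and P=\<psi>] unfolding A_def by blast
  have "{i \<in> {..<d}. i = 0} = {0}" using d by auto
  then have "\<epsilon> < l2norm d (spike d (2 * \<epsilon>) (\<lambda>i. i = 0))"
    using \<epsilon> by (simp add: l2norm_spike real_less_rsqrt)
  then have "spike d (2 * \<epsilon>) (\<lambda>i. i = 0) \<in> monotone_diff d \<inter> pos_orthant d - enlarge d {\<lambda>_. 0} \<epsilon>"
    using \<epsilon> by (intro spike_mem_alternative) auto
  then have alt: "monotone_diff d \<inter> pos_orthant d - enlarge d {\<lambda>_. 0} \<epsilon> \<noteq> {}" by blast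
  define advantage where "advantage =
    (\<Sum>b\<in>?B. bernoulli_weight d p b * measure (obs_law d lam (spike d t b)) A) - measure (obs_law d lam (\<lambda>_. 0)) A"
  have "1 - advantage - sum (bernoulli_weight d p) (?B \<inter> ?N)
        \<le> test_risk d lam \<psi> {\<lambda>_. 0} (monotone_diff d \<inter> pos_orthant d) \<epsilon>"
    unfolding advantage_def A_def
  proof (rule test_risk_ge_mixture[OF \<psi> _ sum_bernoulli_weight _ alt])
    show "0 \<le> bernoulli_weight d p b" for b using p by (rule bernoulli_weight_nonneg)
    show "spike d t b \<in> monotone_diff d \<inter> pos_orthant d - enlarge d {\<lambda>_. 0} \<epsilon>" if "b \<in> ?B - ?N" for b
      using that by (intro spike_mem_alternative[OF t]) auto
  qed
  moreover have "advantage \<le> 1/8 + 2 * (spike_second_moment d lam p t - 1)"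
    using obs_law_mixture_le_chi_square[OF lam sum_bernoulli_weight[of d p] A, where \<theta>="spike d t"]
    by (simp add: advantage_def sum_bernoulli_weight_spike_second_moment)
  moreover have "sum (bernoulli_weight d p) (?B \<inter> ?N) = spike_near_mass d p t \<epsilon>"
    unfolding spike_near_mass_def by (intro sum.cong) auto
  ultimately show ?thesis by linarith
qed

section \<open>Choice of the prior parameters\<close>

lemma exp_le_one_plus_twice: "0 \<le> x \<Longrightarrow> x \<le> 1/2 \<Longrightarrow> exp x \<le> 1 + 2 * (x::real)"
  using exp_bound_lemma[of x] by simp

lemma exp_minus_two_le: "exp (-2::real) \<le> 1/5"
proof -
  have "1 + 2 + 2\<^sup>2 / 2 \<le> exp (2::real)" by (rule exp_lower_Taylor_quadratic) simp
  then show ?thesis by (simp add: exp_minus field_simps)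
qed

lemma exp_minus_nine_fifths_le: "exp (-9/5::real) \<le> 1/4"
proof -
  have "1 + 9/5 + (9/5)\<^sup>2 / 2 \<le> exp (9/5::real)" by (rule exp_lower_Taylor_quadratic) simp
  then have "4 \<le> exp (9/5::real)" by (simp add: power2_eq_square)
  then show ?thesis by (simp add: exp_minus field_simps)
qed

lemma one_plus_power_le:
  fixes z :: real
  assumes "0 \<le> z" "real d * z \<le> 1/2"
  shows "(1 + z) ^ d \<le> 1 + 2 * (real d * z)"
proof -
  have "(1 + z) ^ d \<le> exp z ^ d" using assms(1) by (intro power_mono) auto
  also have "\<dots> = exp (real d * z)" by (simp add: exp_of_nat_mult)
  also have "\<dots> \<le> 1 + 2 * (real d * z)" using assms by (intro exp_le_one_plus_twice) auto
  finally show ?thesis .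
qed

lemma bernoulli_chernoff_factor_le:
  assumes "0 \<le> p" "p \<le> 1"
  shows "(1 - p + p * exp (-2)) ^ d \<le> exp (- 4/5 * (real d * p))"
proof -
  have "p * exp (-2) \<le> p * (1/5)" using assms by (intro mult_left_mono exp_minus_two_le)
  then have "1 - p + p * exp (-2) \<le> 1 + (- 4/5 * p)" by linarith
  also have "\<dots> \<le> exp (- 4/5 * p)" by (rule exp_ge_add_one_self)
  finally have "(1 - p + p * exp (-2)) ^ d \<le> exp (- 4/5 * p) ^ d"
    using assms by (intro power_mono) (auto intro: add_nonneg_nonneg)
  also have "\<dots> = exp (- 4/5 * (real d * p))" by (simp add: exp_of_nat_mult[symmetric] algebra_simps)
  finally show ?thesis .
qed

lemma fourth_power_le_of_le_powr:
  fixes d lam X c :: real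
  assumes d: "0 < d" and lam: "0 < lam" and X: "0 \<le> X"
    and le: "X \<le> c * d powr (1/4) / lam powr (3/4)"
  shows "X ^ 4 * lam ^ 3 \<le> c ^ 4 * d"
proof -
  have a: "(d powr (1/4)) ^ 4 = d" using d by (simp add: powr_power)
  have b: "(lam powr (3/4)) ^ 4 = lam ^ 3"
    using lam by (simp add: powr_power powr_realpow)
  have "X * lam powr (3/4) \<le> c * d powr (1/4)" using le lam by (simp add: field_simps)
  then have "(X * lam powr (3/4)) ^ 4 \<le> (c * d powr (1/4)) ^ 4" using X by (intro power_mono) auto
  then show ?thesis by (simp add: power_mult_distrib a b)
qed

lemma max_one_power_le:
  fixes D lam :: real
  assumes "1 / D \<le> lam" "lam \<le> D" "1 \<le> D"
  shows "max 1 lam ^ 2 \<le> D * lam" "max 1 lam ^ 4 \<le> D ^ 3 * lam ^ 3"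
proof -
  have lam: "0 < lam" and Dlam: "1 \<le> D * lam"
    using assms by (auto simp: field_simps order_less_le_trans[of 0 "1/D" lam])
  show "max 1 lam ^ 2 \<le> D * lam"
  proof (cases "1 \<le> lam")
    case True
    then show ?thesis using assms lam by (simp add: power2_eq_square mult_right_mono)
  qed (use Dlam in simp)
  show "max 1 lam ^ 4 \<le> D ^ 3 * lam ^ 3"
  proof (cases "1 \<le> lam")
    case True
    have "lam \<le> D ^ 3" using assms power_increasing[of 1 3 D] by simp
    then have "lam * lam ^ 3 \<le> D ^ 3 * lam ^ 3" using lam by (intro mult_right_mono) auto
    then show ?thesis using True by (simp add: power_Suc[symmetric] field_simps)
  next
    case False
    then show ?thesis using Dlam by (simp add: power_mult_distrib[symmetric] one_le_power)
  qed
qed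

lemma spike_second_moment_le:
  assumes lam: "0 < lam" and p: "0 \<le> p" and t: "t\<^sup>2 \<le> 1/4" "4 * lam * t\<^sup>2 \<le> 1"
    and small: "real d * p\<^sup>2 * (4 * lam * t\<^sup>2) \<le> 1/32"
  shows "2 * (spike_second_moment d lam p t - 1) \<le> 1/8"
proof -
  define y where "y = lam * (exp (t\<^sup>2) - 1)"
  have "exp (t\<^sup>2) - 1 \<le> 2 * t\<^sup>2" using t exp_le_one_plus_twice[of "t\<^sup>2"] by simp
  then have y: "0 \<le> y" "y \<le> 2 * lam * t\<^sup>2"
    unfolding y_def using lam by (auto intro: mult_left_mono)
  then have "exp y - 1 \<le> 4 * lam * t\<^sup>2" using t exp_le_one_plus_twice[of y] by simp
  then have "p\<^sup>2 * (exp y - 1) \<le> p\<^sup>2 * (4 * lam * t\<^sup>2)"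
    by (intro mult_left_mono) auto
  then have "real d * (p\<^sup>2 * (exp y - 1)) \<le> real d * p\<^sup>2 * (4 * lam * t\<^sup>2)"
    unfolding mult.assoc[of "real d"] by (rule mult_left_mono) simp
  then have "real d * (p\<^sup>2 * (exp y - 1)) \<le> 1/32" using small by linarith
  moreover have "0 \<le> p\<^sup>2 * (exp y - 1)" using y by simp
  ultimately show ?thesis
    using one_plus_power_le[of "p\<^sup>2 * (exp y - 1)" d] by (simp add: spike_second_moment_def y_def)
qed

lemma spike_near_mass_le_quarter:
  assumes p: "0 \<le> p" "p \<le> 1" and t: "0 < t" and many: "6 \<le> real d * p" "4 * \<epsilon>\<^sup>2 / t\<^sup>2 \<le> real d * p"
  shows "spike_near_mass d p t \<epsilon> \<le> 1/4"
proof -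
  have "spike_near_mass d p t \<epsilon> \<le> exp (2 * \<epsilon>\<^sup>2 / t\<^sup>2) * exp (- 4/5 * (real d * p))"
    using spike_near_mass_le[OF t p] bernoulli_chernoff_factor_le[OF p, of d]
    by (meson exp_gt_zero less_imp_le mult_left_mono order_trans)
  also have "\<dots> = exp (2 * \<epsilon>\<^sup>2 / t\<^sup>2 - 4/5 * (real d * p))" by (subst exp_add[symmetric]) simp
  also have "\<dots> \<le> exp (-9/5)" using many by simp
  also have "\<dots> \<le> 1/4" by (rule exp_minus_nine_fifths_le)
  finally show ?thesis .
qed

lemma sparse_scale_bounds:
  fixes D lam X :: real
  assumes D: "1 \<le> D" and lam: "1 / D \<le> lam" "lam \<le> D" and X: "0 \<le> X"
    and small: "X ^ 4 * lam ^ 3 \<le> (1/8192) ^ 4 * D"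
  shows "16 * X * max 1 lam \<le> D" "8192 * X\<^sup>2 * lam * max 1 lam \<le> D"
proof -
  let ?M = "max 1 lam"
  have "0 < 1 / D" using D by simp
  then have lam0: "0 < lam" using lam by linarith
  have "(16 * X * ?M) ^ 4 * lam ^ 3 = 65536 * ?M ^ 4 * (X ^ 4 * lam ^ 3)" by (simp add: power_mult_distrib)
  also have "\<dots> \<le> 65536 * (D ^ 3 * lam ^ 3) * ((1/8192) ^ 4 * D)"
    by (rule mult_mono) (use small max_one_power_le(2)[OF lam D] lam0 D in auto)
  also have "\<dots> \<le> D ^ 4 * lam ^ 3" using D lam0 by (simp add: power4_eq_xxxx power3_eq_cube)
  finally have "(16 * X * ?M) ^ 4 \<le> D ^ 4" using lam0 by simp
  then show "16 * X * ?M \<le> D" using X D by (simp add: power_mono_iff)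
  have "(8192 * X\<^sup>2 * lam * ?M)\<^sup>2 * lam = 8192\<^sup>2 * ?M\<^sup>2 * (X ^ 4 * lam ^ 3)"
    by (simp add: power_mult_distrib power2_eq_square power4_eq_xxxx power3_eq_cube)
  also have "\<dots> \<le> 8192\<^sup>2 * (D * lam) * ((1/8192) ^ 4 * D)"
    by (rule mult_mono) (use small max_one_power_le(1)[OF lam D] lam0 D in auto)
  also have "\<dots> \<le> D\<^sup>2 * lam" using D lam0 by (simp add: power2_eq_square power_divide)
  finally have "(8192 * X\<^sup>2 * lam * ?M)\<^sup>2 \<le> D\<^sup>2" using lam0 by simp
  then show "8192 * X\<^sup>2 * lam * ?M \<le> D" using X D lam0 by (simp add: power_mono_iff)
qed

lemma sparse_spike_prior:
  assumes D: "2000 \<le> real d" and lam: "1 / real d \<le> lam" "lam \<le> real d" and \<epsilon>: "0 < \<epsilon>"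
    and small: "(\<epsilon>\<^sup>2) ^ 4 * lam ^ 3 \<le> (1/8192) ^ 4 * real d"
  obtains p t where "0 \<le> p" "p \<le> 1" "0 \<le> t"
    "2 * (spike_second_moment d lam p t - 1) \<le> 1/8" "spike_near_mass d p t \<epsilon> \<le> 1/4"
proof -
  define M where "M = max 1 lam"
  define p where "p = max (16 * \<epsilon>\<^sup>2 * M) 6 / real d"
  define t where "t = sqrt (1 / (4 * M))"
  have D0: "0 < real d" using D by simp
  then have lam0: "0 < lam" using lam by (meson divide_pos_pos order_less_le_trans zero_less_one)
  have M: "1 \<le> M" "lam \<le> M" unfolding M_def by auto
  have t: "0 < t" "t\<^sup>2 = 1 / (4 * M)" unfolding t_def using M by auto
  have scale: "16 * \<epsilon>\<^sup>2 * M \<le> real d" "8192 * (\<epsilon>\<^sup>2)\<^sup>2 * lam * M \<le> real d"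
    using sparse_scale_bounds[OF _ lam _ small] D unfolding M_def by auto
  have Dp: "real d * p = max (16 * \<epsilon>\<^sup>2 * M) 6" unfolding p_def using D0 by simp
  have p: "0 \<le> p" "p \<le> 1" using Dp scale(1) D D0 by (auto simp: p_def field_simps)
  have "real d * p\<^sup>2 * (lam / M) \<le> 1/32"
  proof (cases "16 * \<epsilon>\<^sup>2 * M \<le> 6")
    case True
    then have "real d * p\<^sup>2 * (lam / M) = 36 / real d * (lam / M)"
      using D0 by (simp add: p_def power2_eq_square max_def)
    also have "\<dots> \<le> 36 / real d" using M lam0 D0 by (intro mult_left_le) (auto simp: divide_le_eq_1)
    also have "\<dots> \<le> 1/32" using D by (simp add: field_simps)
    finally show ?thesis .
  next
    case False
    then have "real d * p\<^sup>2 * (lam / M) = 256 * (\<epsilon>\<^sup>2)\<^sup>2 * lam * M / real d"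
      using D0 M by (simp add: p_def power2_eq_square max_def field_simps)
    also have "\<dots> \<le> 1/32" using scale(2) D0 by (simp add: field_simps)
    finally show ?thesis .
  qed
  moreover have "4 * lam * t\<^sup>2 = lam / M" using t M by simp
  moreover have "t\<^sup>2 \<le> 1/4" unfolding t(2) using M by (simp add: field_simps)
  moreover have "lam / M \<le> 1" using M lam0 by (simp add: divide_le_eq_1)
  ultimately have second_moment: "2 * (spike_second_moment d lam p t - 1) \<le> 1/8"
    using lam0 p by (intro spike_second_moment_le) auto
  have "4 * \<epsilon>\<^sup>2 / t\<^sup>2 = 16 * \<epsilon>\<^sup>2 * M" unfolding t(2) by simp
  then have near: "spike_near_mass d p t \<epsilon> \<le> 1/4"
    using Dp by (intro spike_near_mass_le_quarter p t(1)) auto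
  show ?thesis using p less_imp_le[OF t(1)] second_moment near by (rule that)
qed

lemma dense_scale_bounds:
  fixes D lam X :: real
  assumes D: "1 \<le> D" "D < 2000" and lam: "1 / D \<le> lam" "lam \<le> D" and X: "0 \<le> X"
    and small: "X ^ 4 * lam ^ 3 \<le> (1/8192) ^ 4 * D"
  shows "X \<le> D / 8192" "lam * X \<le> 1/128"
proof -
  have "0 < 1 / D" using D by simp
  then have lam0: "0 < lam" using lam by linarith
  have "1 \<le> D * lam" using lam D by (simp add: field_simps)
  then have "1 \<le> (D * lam) ^ 3" by (rule one_le_power)
  then have "X ^ 4 \<le> X ^ 4 * (D * lam) ^ 3" using X by (simp add: mult_le_cancel_left1)
  also have "\<dots> = (X ^ 4 * lam ^ 3) * D ^ 3" by (simp add: power_mult_distrib)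
  also have "\<dots> \<le> ((1/8192) ^ 4 * D) * D ^ 3" using small D by (intro mult_right_mono) auto
  also have "\<dots> = (D / 8192) ^ 4" by (simp add: power4_eq_xxxx power3_eq_cube field_simps)
  finally show "X \<le> D / 8192" using X D by (simp add: power_mono_iff)
  have "(lam * X) ^ 4 = lam * (X ^ 4 * lam ^ 3)" by (simp add: power4_eq_xxxx power3_eq_cube)
  also have "\<dots> \<le> D * ((1/8192) ^ 4 * D)" by (rule mult_mono[OF lam(2) small]) (use lam0 D in auto)
  also have "\<dots> \<le> 2000 * ((1/8192) ^ 4 * 2000)" using D by (intro mult_mono) auto
  also have "\<dots> \<le> (1/128) ^ 4" by (simp add: power4_eq_xxxx)
  finally show "lam * X \<le> 1/128" using X lam0 by (simp add: power_mono_iff)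
qed

lemma spike_near_mass_one_eq_zero:
  assumes "\<epsilon>\<^sup>2 < real d * t\<^sup>2"
  shows "spike_near_mass d 1 t \<epsilon> = 0"
  unfolding spike_near_mass_def
proof (intro sum.neutral ballI)
  fix b assume b: "b \<in> {b \<in> {..<d} \<rightarrow>\<^sub>E UNIV. l2norm d (spike d t b) \<le> \<epsilon>}"
  have "\<exists>i<d. \<not> b i"
  proof (rule ccontr)
    assume "\<not> (\<exists>i<d. \<not> b i)"
    then have "{i \<in> {..<d}. b i} = {..<d}" by auto
    then have "l2norm d (spike d t b) = sqrt (real d * t\<^sup>2)" by (simp add: l2norm_spike)
    moreover have "\<epsilon> < sqrt (real d * t\<^sup>2)" using assms by (rule real_less_rsqrt)
    ultimately show False using b by simp
  qed
  then obtain i where "i < d" "\<not> b i" by blast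
  then show "bernoulli_weight d 1 b = 0"
    unfolding bernoulli_weight_def by (intro prod_zero) auto
qed

lemma dense_spike_prior:
  assumes d: "1 \<le> d" "real d < 2000" and lam: "1 / real d \<le> lam" "lam \<le> real d" and \<epsilon>: "0 < \<epsilon>"
    and small: "(\<epsilon>\<^sup>2) ^ 4 * lam ^ 3 \<le> (1/8192) ^ 4 * real d"
  obtains t where "0 \<le> t" "2 * (spike_second_moment d lam 1 t - 1) \<le> 1/8" "spike_near_mass d 1 t \<epsilon> = 0"
proof -
  define t where "t = sqrt (2 * \<epsilon>\<^sup>2 / real d)"
  have D0: "0 < real d" using d by simp
  then have lam0: "0 < lam" using lam by (meson divide_pos_pos order_less_le_trans zero_less_one)
  have t: "0 \<le> t" "t\<^sup>2 = 2 * \<epsilon>\<^sup>2 / real d" unfolding t_def using D0 by auto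
  have "1 \<le> real d" "0 \<le> \<epsilon>\<^sup>2" using d by auto
  note scale = dense_scale_bounds[OF \<open>1 \<le> real d\<close> d(2) lam \<open>0 \<le> \<epsilon>\<^sup>2\<close> small]
  define w where "w = real d * (lam * (exp (t\<^sup>2) - 1))"
  have "t\<^sup>2 \<le> 1/2" unfolding t(2) using scale(1) D0 by (simp add: pos_divide_le_eq)
  then have "exp (t\<^sup>2) - 1 \<le> 2 * t\<^sup>2" using exp_le_one_plus_twice[of "t\<^sup>2"] by simp
  then have "w \<le> real d * (lam * (2 * t\<^sup>2))"
    unfolding w_def using D0 lam0 by (intro mult_left_mono) auto
  also have "\<dots> = 4 * (lam * \<epsilon>\<^sup>2)" unfolding t(2) using D0 by (simp add: field_simps)
  finally have w: "0 \<le> w" "w \<le> 4 * (lam * \<epsilon>\<^sup>2)" unfolding w_def using lam0 by auto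
  have "spike_second_moment d lam 1 t = exp w"
    by (simp add: spike_second_moment_def w_def exp_of_nat_mult[symmetric])
  also have "\<dots> \<le> 1 + 2 * w" using w scale by (intro exp_le_one_plus_twice) auto
  finally have "2 * (spike_second_moment d lam 1 t - 1) \<le> 1/8" using w scale by auto
  moreover have "spike_near_mass d 1 t \<epsilon> = 0"
    using t \<epsilon> D0 by (intro spike_near_mass_one_eq_zero) (simp add: field_simps)
  ultimately show ?thesis using that t by auto
qed

lemma spike_prior_exists:
  assumes d: "1 \<le> d" and lam: "1 / real d \<le> lam" "lam \<le> real d" and \<epsilon>: "0 < \<epsilon>"
    and small: "(\<epsilon>\<^sup>2) ^ 4 * lam ^ 3 \<le> (1/8192) ^ 4 * real d"
  obtains p t where "0 \<le> p" "p \<le> 1" "0 \<le> t"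
    "2 * (spike_second_moment d lam p t - 1) \<le> 1/8" "spike_near_mass d p t \<epsilon> \<le> 1/4"
proof (cases "2000 \<le> real d")
  case True
  then show ?thesis using sparse_spike_prior[OF _ lam \<epsilon> small] that by blast
next
  case False
  then obtain t where "0 \<le> t" "2 * (spike_second_moment d lam 1 t - 1) \<le> 1/8" "spike_near_mass d 1 t \<epsilon> = 0"
    using dense_spike_prior[OF d _ lam \<epsilon> small] by force
  then show ?thesis using that[of 1 t] by simp
qed

theorem proposition3:
  "\<exists>c::real. c > 0 \<and>
     (\<forall>(d::nat) (lam::real) (\<epsilon>::real).
        d \<ge> 1 \<longrightarrow> 1 / real d \<le> lam \<longrightarrow> lam \<le> real d \<longrightarrow> \<epsilon> > 0 \<longrightarrow>
        \<epsilon>^2 \<le> c * real d powr (1/4) / lam powr (3/4) \<longrightarrow>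
        (\<forall>\<psi> \<in> measurable (obs_full_space d) (count_space UNIV).
           test_risk d lam \<psi> {\<lambda>_. 0} (monotone_diff d \<inter> pos_orthant d) \<epsilon> \<ge> 1/2))"
proof (intro exI[of _ "1/8192"] conjI allI impI ballI)
  show "(0::real) < 1/8192" by simp
  fix d :: nat and lam \<epsilon> :: real and \<psi> :: "(nat \<Rightarrow> nat \<times> (nat \<Rightarrow> real)) \<Rightarrow> bool"
  assume d: "1 \<le> d" and lam: "1 / real d \<le> lam" "lam \<le> real d" and \<epsilon>: "0 < \<epsilon>"
    and small: "\<epsilon>^2 \<le> 1/8192 * real d powr (1/4) / lam powr (3/4)"
    and \<psi>: "\<psi> \<in> measurable (obs_full_space d) (count_space UNIV)"
  have "0 < 1 / real d" using d by simp
  then have lam0: "0 < lam" using lam by linarith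
  have "(\<epsilon>\<^sup>2) ^ 4 * lam ^ 3 \<le> (1/8192) ^ 4 * real d"
    using small d lam0 by (intro fourth_power_le_of_le_powr) auto
  then obtain p t where p: "0 \<le> p" "p \<le> 1" and t: "0 \<le> t"
    and bounds: "2 * (spike_second_moment d lam p t - 1) \<le> 1/8" "spike_near_mass d p t \<epsilon> \<le> 1/4"
    using spike_prior_exists[OF d lam \<epsilon>] by blast
  show "1/2 \<le> test_risk d lam \<psi> {\<lambda>_. 0} (monotone_diff d \<inter> pos_orthant d) \<epsilon>"
    using test_risk_ge_spike_prior[OF d lam0 \<epsilon> p t \<psi>] bounds by linarith
qed

end
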